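(* Let $(\mathcal{X},d_\mathcal{X})$ and $(\mathcal{Y},d_\mathcal{Y})$ be complete separable metric spaces and let $(\mathcal{H},\|\cdot\|_\mathcal{H})$ be a separable real Hilbert space with metric $d_\mathcal{H}(u,v):=\|u-v\|_\mathcal{H}$; equip these spaces with their Borel $\sigma$-algebras $\mathcal{B}_\mathcal{X}$, $\mathcal{B}_\mathcal{Y}$, $\mathcal{B}_\mathcal{H}$. Let $P$ be a probability measure on $(\mathcal{X}\times\mathcal{Y},\mathcal{B}_{\mathcal{X}\times\mathcal{Y}})$. Let $\psi:[0,\infty)\to[0,1]$ be a continuous, subadditive and monotone increasing function with $\psi(0)=0$ and $\psi(x)>0$ for all $x>0$, and for measurable $f_1,f_2:\mathcal{X}\to\mathcal{H}$ define $$d_\psi(f_1,f_2):=\int_{\mathcal{X}\times\mathcal{Y}} \psi\bigl(d_\mathcal{H}(f_1(x),f_2(x))\bigr)\,dP(x,y).$$ Let $C(\mathcal{X},\mathcal{H})$ be the set of all continuous functions $(\mathcal{X},d_\mathcal{X})\to(\mathcal{H},d_\mathcal{H})$, and let $\mathcal{L}_0(\mathcal{X},\mathcal{H})$ be the set of all $(\mathcal{B}_\mathcal{X},\mathcal{B}_\mathcal{H})$-measurable functions $\mathcal{X}\to\mathcal{H}$. Let $\mathcal{F}\subset\mathcal{L}_0(\mathcal{X},\mathcal{H})$ be such that either $\mathcal{F}$ is a dense subset of $C(\mathcal{X},\mathcal{H})$, or $\mathcal{F}$ contains a dense subset of $C(\mathcal{X},\mathcal{H})$, where denseness is with respect to $d_\psi$.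 Then $\mathcal{F}$ is dense in $\mathcal{L}_0(\mathcal{X},\mathcal{H})$ with respect to $d_\psi$: for every $\varepsilon>0$ and every $f\in\mathcal{L}_0(\mathcal{X},\mathcal{H})$ there exists $g_{\varepsilon,f}\in\mathcal{F}$ with $d_\psi(f,g_{\varepsilon,f})<\varepsilon$.
   Context: A subset $S$ is "dense in $T$ with respect to $d_\psi$" means: for every $t\in T$ and every $\varepsilon>0$ there is $s\in S$ with $d_\psi(t,s)<\varepsilon$. *)

theory Defs
  imports "HOL-Probability.Probability"
begin

definition d_psi :: "('x \<times> 'y) measure \<Rightarrow> (real \<Rightarrow> real) \<Rightarrow> ('x \<Rightarrow> 'h::metric_space) \<Rightarrow> ('x \<Rightarrow> 'h) \<Rightarrow> real" where
  "d_psi P \<psi> f1 f2 = (\<integral>z. \<psi> (dist (f1 (fst z)) (f2 (fst z))) \<partial>P)"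

definition dense_wrt :: "('a \<Rightarrow> 'a \<Rightarrow> real) \<Rightarrow> 'a set \<Rightarrow> 'a set \<Rightarrow> bool" where
  "dense_wrt d S T \<longleftrightarrow> (\<forall>t\<in>T. \<forall>\<epsilon>>0. \<exists>s\<in>S. d t s < \<epsilon>)"

end

theory Submission
  imports Defs
begin

text \<open>
  The pseudo-distance \<open>d\<^sub>\<psi>\<close> only depends on the first marginal \<open>\<mu>\<close> of \<open>P\<close>, a finite Borel
  measure on the Polish space \<open>\<X>\<close>, and it satisfies the triangle inequality because \<open>\<psi>\<close> is
  monotone and subadditive. It therefore suffices to show that continuous functions are
  \<open>d\<^sub>\<psi>\<close>-dense in the measurable ones. By outer regularity of \<open>\<mu>\<close>, an indicator \<open>1\<^sub>A c\<close> agrees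
  with a continuous function outside \<open>(U - A) \<union> (V - -A)\<close> for open \<open>U \<supseteq> A\<close>, \<open>V \<supseteq> -A\<close> of nearly
  the same measure, and \<open>\<psi> \<le> 1\<close> bounds the distance by that measure. Finite sums of indicators
  are handled by subadditivity, and every measurable function is a pointwise limit of such
  simple functions, where dominated convergence applies since \<open>\<psi>\<close> is bounded and continuous
  at \<open>0\<close>.
\<close>

lemma continuous_separation_closed:
  fixes C T :: "'x::metric_space set" and c :: "'h::real_normed_vector"
  assumes "closed C" "closed T" "C \<inter> T = {}"
  shows "\<exists>g. continuous_on UNIV g \<and> (\<forall>x\<in>C. g x = c) \<and> (\<forall>x\<in>T. g x = 0)"
proof (cases "C = {} \<or> T = {}")
  case True
  then show ?thesis
    by (intro exI[of _ "\<lambda>x. if C = {} then 0 else c"]) auto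
next
  case False
  have denom_pos: "setdist {x} T + setdist {x} C > 0" for x
  proof -
    have "setdist {x} T \<noteq> 0 \<or> setdist {x} C \<noteq> 0"
      using assms False by (auto simp: setdist_eq_0_closed)
    then show ?thesis
      using setdist_pos_le[of "{x}" T] setdist_pos_le[of "{x}" C] by linarith
  qed
  define g where "g x = (setdist {x} T / (setdist {x} T + setdist {x} C)) *\<^sub>R c" for x
  have "continuous_on UNIV g"
    unfolding g_def by (intro continuous_intros) (metis less_irrefl denom_pos)
  moreover have "g x = c" if "x \<in> C" for x
  proof -
    have "setdist {x} C = 0" using that assms(1) by (simp add: setdist_eq_0_closed)
    with denom_pos[of x] show ?thesis by (simp add: g_def)
  qed
  moreover have "g x = 0" if "x \<in> T" for x
    using that assms by (simp add: g_def setdist_eq_0_closed)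
  ultimately show ?thesis by blast
qed

lemma open_superset_measure_less:
  fixes M :: "'x::polish_space measure"
  assumes "finite_measure M" "sets M = sets borel" and B: "B \<in> sets borel" and d: "d > 0"
  shows "\<exists>U. B \<subseteq> U \<and> open U \<and> measure M U < measure M B + d"
proof -
  interpret finite_measure M by fact
  have "emeasure M B < ennreal (measure M B + d)"
    using d by (simp add: emeasure_eq_measure ennreal_less_iff)
  then have "(INF U\<in>{U. B \<subseteq> U \<and> open U}. emeasure M U) < ennreal (measure M B + d)"
    by (simp add: outer_regular[OF assms(2) _ B, symmetric])
  then obtain U where U: "B \<subseteq> U" "open U" "emeasure M U < ennreal (measure M B + d)"
    by (auto simp: INF_less_iff)
  then have "ennreal (measure M U) < ennreal (measure M B + d)"
    by (simp add: emeasure_eq_measure)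
  then have "measure M U < measure M B + d"
    using d by (subst (asm) ennreal_less_iff) auto
  with U show ?thesis by blast
qed

locale psi_distance = finite_measure \<mu>
  for \<mu> :: "'x::polish_space measure" +
  fixes \<psi> :: "real \<Rightarrow> real"
  assumes sets_\<mu>: "sets \<mu> = sets borel"
    and psi_cont: "continuous_on {0..} \<psi>"
    and psi_range: "\<And>t. t \<ge> 0 \<Longrightarrow> \<psi> t \<in> {0..1}"
    and psi_subadd: "\<And>a b. a \<ge> 0 \<Longrightarrow> b \<ge> 0 \<Longrightarrow> \<psi> (a + b) \<le> \<psi> a + \<psi> b"
    and psi_mono: "mono_on {0..} \<psi>"
    and psi_0: "\<psi> 0 = 0"
begin

definition psi_dist :: "('x \<Rightarrow> 'h::{real_normed_vector, second_countable_topology}) \<Rightarrow> ('x \<Rightarrow> 'h) \<Rightarrow> real"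
  where "psi_dist f g = (\<integral>x. \<psi> (dist (f x) (g x)) \<partial>\<mu>)"

lemma space_\<mu>: "space \<mu> = UNIV"
  using sets_eq_imp_space_eq[OF sets_\<mu>] by simp

lemma borel_measurable_\<mu>: "borel_measurable \<mu> = borel_measurable borel"
  by (rule measurable_cong_sets[OF sets_\<mu> refl])

lemma psi_dist_commute: "psi_dist f g = psi_dist g f"
  by (simp add: psi_dist_def dist_commute)

lemma psi_dist_self: "psi_dist f f = 0"
  by (simp add: psi_dist_def psi_0)

lemma borel_measurable_psi_dist_integrand:
  fixes f g :: "'x \<Rightarrow> 'h::{real_normed_vector, second_countable_topology}"
  assumes "f \<in> borel_measurable borel" "g \<in> borel_measurable borel"
  shows "(\<lambda>x. \<psi> (dist (f x) (g x))) \<in> borel_measurable \<mu>"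
proof -
  \<comment> \<open>\<open>\<psi>\<close> is only continuous on \<open>[0,\<infinity>)\<close>; extend it constantly to the left.\<close>
  have "continuous_on UNIV (\<lambda>t. \<psi> (max 0 t))"
    by (rule continuous_on_compose2[OF psi_cont]) (auto intro!: continuous_intros)
  moreover have "(\<lambda>x. dist (f x) (g x)) \<in> borel_measurable borel"
    using assms by measurable
  ultimately have "(\<lambda>x. \<psi> (max 0 (dist (f x) (g x)))) \<in> borel_measurable borel"
    using borel_measurable_continuous_onI measurable_compose by blast
  then show ?thesis by (simp add: borel_measurable_\<mu>)
qed

lemma integrable_psi_dist_integrand:
  fixes f g :: "'x \<Rightarrow> 'h::{real_normed_vector, second_countable_topology}"
  assumes "f \<in> borel_measurable borel" "g \<in> borel_measurable borel"
  shows "integrable \<mu> (\<lambda>x. \<psi> (dist (f x) (g x)))"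
  by (rule integrable_const_bound[where B=1])
    (use psi_range borel_measurable_psi_dist_integrand[OF assms] in auto)

lemma psi_dist_triangle:
  fixes f g h :: "'x \<Rightarrow> 'h::{real_normed_vector, second_countable_topology}"
  assumes "f \<in> borel_measurable borel" "g \<in> borel_measurable borel" "h \<in> borel_measurable borel"
  shows "psi_dist f h \<le> psi_dist f g + psi_dist g h"
proof -
  have "psi_dist f h \<le> (\<integral>x. \<psi> (dist (f x) (g x)) + \<psi> (dist (g x) (h x)) \<partial>\<mu>)"
    unfolding psi_dist_def
  proof (rule integral_mono)
    fix x
    have "\<psi> (dist (f x) (h x)) \<le> \<psi> (dist (f x) (g x) + dist (g x) (h x))"
      by (rule mono_onD[OF psi_mono]) (auto intro: dist_triangle)
    also have "\<dots> \<le> \<psi> (dist (f x) (g x)) + \<psi> (dist (g x) (h x))"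
      by (rule psi_subadd) auto
    finally show "\<psi> (dist (f x) (h x)) \<le> \<psi> (dist (f x) (g x)) + \<psi> (dist (g x) (h x))" .
  qed (use integrable_psi_dist_integrand assms in \<open>auto intro!: Bochner_Integration.integrable_add\<close>)
  also have "\<dots> = psi_dist f g + psi_dist g h"
    unfolding psi_dist_def
    by (rule Bochner_Integration.integral_add) (use integrable_psi_dist_integrand assms in auto)
  finally show ?thesis .
qed

lemma psi_dist_add_le:
  fixes f1 f2 g1 g2 :: "'x \<Rightarrow> 'h::{real_normed_vector, second_countable_topology}"
  assumes "f1 \<in> borel_measurable borel" "g1 \<in> borel_measurable borel"
    "f2 \<in> borel_measurable borel" "g2 \<in> borel_measurable borel"
  shows "psi_dist (\<lambda>x. f1 x + f2 x) (\<lambda>x. g1 x + g2 x) \<le> psi_dist f1 g1 + psi_dist f2 g2"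
proof -
  have "psi_dist (\<lambda>x. f1 x + f2 x) (\<lambda>x. g1 x + g2 x)
      \<le> (\<integral>x. \<psi> (dist (f1 x) (g1 x)) + \<psi> (dist (f2 x) (g2 x)) \<partial>\<mu>)"
    unfolding psi_dist_def
  proof (rule integral_mono)
    fix x
    have "\<psi> (dist (f1 x + f2 x) (g1 x + g2 x)) \<le> \<psi> (dist (f1 x) (g1 x) + dist (f2 x) (g2 x))"
      by (rule mono_onD[OF psi_mono]) (auto intro: dist_triangle_add)
    also have "\<dots> \<le> \<psi> (dist (f1 x) (g1 x)) + \<psi> (dist (f2 x) (g2 x))"
      by (rule psi_subadd) auto
    finally show "\<psi> (dist (f1 x + f2 x) (g1 x + g2 x))
        \<le> \<psi> (dist (f1 x) (g1 x)) + \<psi> (dist (f2 x) (g2 x))" .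
    show "integrable \<mu> (\<lambda>x. \<psi> (dist (f1 x + f2 x) (g1 x + g2 x)))"
      by (rule integrable_psi_dist_integrand) (use assms in measurable)
  qed (use integrable_psi_dist_integrand assms in \<open>auto intro!: Bochner_Integration.integrable_add\<close>)
  also have "\<dots> = psi_dist f1 g1 + psi_dist f2 g2"
    unfolding psi_dist_def
    by (rule Bochner_Integration.integral_add) (use integrable_psi_dist_integrand assms in auto)
  finally show ?thesis .
qed

lemma psi_dist_le_measure:
  fixes f g :: "'x \<Rightarrow> 'h::{real_normed_vector, second_countable_topology}"
  assumes "f \<in> borel_measurable borel" "g \<in> borel_measurable borel" "B \<in> sets borel"
    and agree: "\<And>x. x \<notin> B \<Longrightarrow> f x = g x"
  shows "psi_dist f g \<le> measure \<mu> B"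
proof -
  have "psi_dist f g \<le> (\<integral>x. indicator B x \<partial>\<mu>)"
    unfolding psi_dist_def
  proof (rule integral_mono)
    show "\<psi> (dist (f x) (g x)) \<le> indicator B x" for x
      using agree[of x] psi_range[of "dist (f x) (g x)"] psi_0 by (cases "x \<in> B") auto
  qed (use integrable_psi_dist_integrand assms sets_\<mu> in
      \<open>auto intro!: integrable_real_indicator simp: less_top[symmetric]\<close>)
  then show ?thesis by (simp add: space_\<mu>)
qed

lemma psi_dist_tendsto_zero:
  fixes f :: "nat \<Rightarrow> 'x \<Rightarrow> 'h::{real_normed_vector, second_countable_topology}"
  assumes "\<And>n. f n \<in> borel_measurable borel" "g \<in> borel_measurable borel"
    and lim: "\<And>x. (\<lambda>n. f n x) \<longlonglongrightarrow> g x"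
  shows "(\<lambda>n. psi_dist (f n) g) \<longlonglongrightarrow> 0"
proof -
  have "(\<lambda>n. \<integral>x. \<psi> (dist (f n x) (g x)) \<partial>\<mu>) \<longlonglongrightarrow> (\<integral>x. 0 \<partial>\<mu>)"
  proof (rule integral_dominated_convergence[where w="\<lambda>x. 1"])
    show "(\<lambda>x. 0::real) \<in> borel_measurable \<mu>" "integrable \<mu> (\<lambda>x. 1::real)"
      by simp_all
    show "(\<lambda>x. \<psi> (dist (f n x) (g x))) \<in> borel_measurable \<mu>" for n
      using assms(1,2) by (rule borel_measurable_psi_dist_integrand)
    show "AE x in \<mu>. (\<lambda>n. \<psi> (dist (f n x) (g x))) \<longlonglongrightarrow> 0"
    proof (rule AE_I2)
      fix x
      have "(\<lambda>n. dist (f n x) (g x)) \<longlonglongrightarrow> 0"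
        using lim[of x] by (rule tendsto_dist_iff[THEN iffD1])
      then have "(\<lambda>n. \<psi> (dist (f n x) (g x))) \<longlonglongrightarrow> \<psi> 0"
        by (rule continuous_on_tendsto_compose[OF psi_cont]) auto
      then show "(\<lambda>n. \<psi> (dist (f n x) (g x))) \<longlonglongrightarrow> 0" by (simp add: psi_0)
    qed
    show "AE x in \<mu>. norm (\<psi> (dist (f n x) (g x))) \<le> 1" for n
      using psi_range[of "dist (f n x) (g x)" for x] by auto
  qed
  then show ?thesis by (simp add: psi_dist_def)
qed

definition continuous_approximable :: "('x \<Rightarrow> 'h::{real_normed_vector, second_countable_topology}) \<Rightarrow> bool"
  where "continuous_approximable f \<longleftrightarrow> f \<in> borel_measurable borel \<and>
    (\<forall>\<epsilon>>0. \<exists>g. continuous_on UNIV g \<and> psi_dist f g < \<epsilon>)"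

lemma continuous_approximableD:
  "continuous_approximable f \<Longrightarrow> \<epsilon> > 0 \<Longrightarrow> \<exists>g. continuous_on UNIV g \<and> psi_dist f g < \<epsilon>"
  by (simp add: continuous_approximable_def)

lemma continuous_approximable_measurable:
  "continuous_approximable f \<Longrightarrow> f \<in> borel_measurable borel"
  by (simp add: continuous_approximable_def)

lemma continuous_approximable_continuous:
  assumes "continuous_on UNIV f"
  shows "continuous_approximable f"
  unfolding continuous_approximable_def
  using assms borel_measurable_continuous_onI[OF assms]
  by (auto intro!: exI[of _ f] simp: psi_dist_self)

lemma continuous_approximable_add:
  assumes "continuous_approximable f1" "continuous_approximable f2"
  shows "continuous_approximable (\<lambda>x. f1 x + f2 x)"
  unfolding continuous_approximable_def
proof (intro conjI allI impI)
  have m: "f1 \<in> borel_measurable borel" "f2 \<in> borel_measurable borel"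
    using assms by (simp_all add: continuous_approximable_measurable)
  then show "(\<lambda>x. f1 x + f2 x) \<in> borel_measurable borel" by measurable
  fix \<epsilon> :: real assume "\<epsilon> > 0"
  then have \<epsilon>2: "\<epsilon>/2 > 0" by simp
  obtain g1 g2 where g: "continuous_on UNIV g1" "psi_dist f1 g1 < \<epsilon>/2"
      "continuous_on UNIV g2" "psi_dist f2 g2 < \<epsilon>/2"
    using continuous_approximableD[OF assms(1) \<epsilon>2] continuous_approximableD[OF assms(2) \<epsilon>2]
    by blast
  have "psi_dist (\<lambda>x. f1 x + f2 x) (\<lambda>x. g1 x + g2 x) \<le> psi_dist f1 g1 + psi_dist f2 g2"
    by (rule psi_dist_add_le) (use m g borel_measurable_continuous_onI in auto)
  with g show "\<exists>g. continuous_on UNIV g \<and> psi_dist (\<lambda>x. f1 x + f2 x) g < \<epsilon>"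
    by (intro exI[of _ "\<lambda>x. g1 x + g2 x"]) (auto intro!: continuous_intros)
qed

lemma continuous_approximable_sum:
  fixes f :: "'i \<Rightarrow> 'x \<Rightarrow> 'h::{real_normed_vector, second_countable_topology}"
  shows "finite I \<Longrightarrow> (\<And>i. i \<in> I \<Longrightarrow> continuous_approximable (f i))
    \<Longrightarrow> continuous_approximable (\<lambda>x. \<Sum>i\<in>I. f i x)"
proof (induction I rule: finite_induct)
  case empty
  then show ?case using continuous_approximable_continuous[of "\<lambda>x. 0"] by simp
next
  case (insert a I)
  then show ?case using continuous_approximable_add[of "f a" "\<lambda>x. \<Sum>i\<in>I. f i x"] by simp
qed

lemma continuous_approximable_limit:
  fixes f :: "nat \<Rightarrow> 'x \<Rightarrow> 'h::{real_normed_vector, second_countable_topology}"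
  assumes f: "\<And>n. continuous_approximable (f n)" and g: "g \<in> borel_measurable borel"
    and lim: "\<And>x. (\<lambda>n. f n x) \<longlonglongrightarrow> g x"
  shows "continuous_approximable g"
  unfolding continuous_approximable_def
proof (intro conjI allI impI g)
  fix \<epsilon> :: real assume "\<epsilon> > 0"
  then have \<epsilon>2: "\<epsilon>/2 > 0" by simp
  have fm: "f n \<in> borel_measurable borel" for n
    using f by (rule continuous_approximable_measurable)
  obtain n where n: "psi_dist (f n) g < \<epsilon>/2"
    using order_tendstoD(2)[OF psi_dist_tendsto_zero[OF fm g lim] \<epsilon>2]
    by (auto simp: eventually_sequentially)
  obtain h where h: "continuous_on UNIV h" "psi_dist (f n) h < \<epsilon>/2"
    using continuous_approximableD[OF f \<epsilon>2] by blast
  have "psi_dist g h \<le> psi_dist g (f n) + psi_dist (f n) h"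
    by (rule psi_dist_triangle) (use fm g h borel_measurable_continuous_onI in auto)
  with n h show "\<exists>h. continuous_on UNIV h \<and> psi_dist g h < \<epsilon>"
    by (auto simp: psi_dist_commute)
qed

lemma continuous_approximable_indicator:
  fixes c :: "'h::{real_normed_vector, second_countable_topology}"
  assumes A: "A \<in> sets borel"
  shows "continuous_approximable (\<lambda>x. indicator A x *\<^sub>R c)"
  unfolding continuous_approximable_def
proof (intro conjI allI impI)
  show fm: "(\<lambda>x. indicator A x *\<^sub>R c) \<in> borel_measurable borel"
    using A by (intro borel_measurable_scaleR borel_measurable_indicator borel_measurable_const)
  fix \<epsilon> :: real assume "\<epsilon> > 0"
  then have \<epsilon>3: "\<epsilon>/3 > 0" by simp
  have A': "- A \<in> sets borel" using A by auto
  obtain U V where U: "A \<subseteq> U" "open U" "measure \<mu> U < measure \<mu> A + \<epsilon>/3"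
      and V: "- A \<subseteq> V" "open V" "measure \<mu> V < measure \<mu> (- A) + \<epsilon>/3"
    using open_superset_measure_less[OF finite_measure_axioms sets_\<mu> A \<epsilon>3]
      open_superset_measure_less[OF finite_measure_axioms sets_\<mu> A' \<epsilon>3] by blast
  have in_sets: "A \<in> sets \<mu>" "- A \<in> sets \<mu>" "U \<in> sets \<mu>" "V \<in> sets \<mu>"
    using A A' U V sets_\<mu> by auto
  obtain g where g: "continuous_on UNIV g" "\<forall>x\<in>- V. g x = c" "\<forall>x\<in>- U. g x = 0"
    using continuous_separation_closed[of "- V" "- U" c] U V by (auto simp: closed_def)
  have "psi_dist (\<lambda>x. indicator A x *\<^sub>R c) g \<le> measure \<mu> ((U - A) \<union> (V - - A))"
  proof (rule psi_dist_le_measure[OF fm borel_measurable_continuous_onI[OF g(1)]])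
    show "(U - A) \<union> (V - - A) \<in> sets borel" using A A' U(2) V(2) by auto
    show "indicator A x *\<^sub>R c = g x" if "x \<notin> (U - A) \<union> (V - - A)" for x
      using that g(2,3) U(1) V(1) by (cases "x \<in> A") auto
  qed
  also have "\<dots> \<le> measure \<mu> (U - A) + measure \<mu> (V - - A)"
    by (rule measure_Un_le) (use in_sets in auto)
  also have "\<dots> < \<epsilon>"
  proof -
    have "measure \<mu> (U - A) = measure \<mu> U - measure \<mu> A"
      by (rule finite_measure_Diff) (use in_sets U in auto)
    moreover have "measure \<mu> (V - - A) = measure \<mu> V - measure \<mu> (- A)"
      by (rule finite_measure_Diff) (use in_sets V in auto)
    ultimately show ?thesis using U(3) V(3) \<open>\<epsilon> > 0\<close> by linarith
  qed
  finally have "psi_dist (\<lambda>x. indicator A x *\<^sub>R c) g < \<epsilon>" .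
  with g(1) show "\<exists>g. continuous_on UNIV g \<and> psi_dist (\<lambda>x. indicator A x *\<^sub>R c) g < \<epsilon>"
    by blast
qed

lemma continuous_approximable_simple_function:
  fixes s :: "'x \<Rightarrow> 'h::{real_normed_vector, second_countable_topology}"
  assumes s: "simple_function \<mu> s"
  shows "continuous_approximable s"
proof -
  have fin: "finite (range s)"
    using s space_\<mu> by (simp add: simple_function_def)
  have "s -` {c} \<in> sets borel" for c
    using simple_functionD(2)[OF s, of "{c}"] space_\<mu> sets_\<mu> by simp
  then have "continuous_approximable (\<lambda>x. \<Sum>c\<in>range s. indicator (s -` {c}) x *\<^sub>R c)"
    by (intro continuous_approximable_sum[OF fin] continuous_approximable_indicator)
  moreover have "(\<Sum>c\<in>range s. indicator (s -` {c}) x *\<^sub>R c) = s x" for x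
  proof -
    have "(\<Sum>c\<in>range s. indicator (s -` {c}) x *\<^sub>R c) = (\<Sum>c\<in>range s. if c = s x then c else 0)"
      by (rule sum.cong) (auto simp: indicator_def)
    then show ?thesis using fin by (simp add: sum.delta')
  qed
  ultimately show ?thesis by simp
qed

lemma borel_measurable_continuous_approximable:
  fixes f :: "'x \<Rightarrow> 'h::{real_normed_vector, second_countable_topology}"
  assumes f: "f \<in> borel_measurable borel"
  shows "continuous_approximable f"
proof -
  obtain s where "\<And>i. simple_function \<mu> (s i)" "\<And>x. (\<lambda>i. s i x) \<longlonglongrightarrow> f x"
    using borel_measurable_implies_sequence_metric[of f \<mu> 0] f space_\<mu>
    by (auto simp: borel_measurable_\<mu>)
  then show ?thesis
    by (intro continuous_approximable_limit[OF continuous_approximable_simple_function f])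
qed

lemma dense_continuous_imp_dense_borel_measurable:
  fixes D :: "('x \<Rightarrow> 'h::{real_normed_vector, second_countable_topology}) set"
  assumes D: "D \<subseteq> borel_measurable borel"
    and dense: "\<And>h \<delta>. continuous_on UNIV h \<Longrightarrow> \<delta> > 0 \<Longrightarrow> \<exists>g\<in>D. psi_dist h g < \<delta>"
    and f: "f \<in> borel_measurable borel" and "\<epsilon> > 0"
  shows "\<exists>g\<in>D. psi_dist f g < \<epsilon>"
proof -
  have \<epsilon>2: "\<epsilon>/2 > 0" using \<open>\<epsilon> > 0\<close> by simp
  obtain h where h: "continuous_on UNIV h" "psi_dist f h < \<epsilon>/2"
    using continuous_approximableD[OF borel_measurable_continuous_approximable[OF f] \<epsilon>2] by blast
  obtain g where g: "g \<in> D" "psi_dist h g < \<epsilon>/2"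
    using dense[OF h(1) \<epsilon>2] by blast
  have "psi_dist f g \<le> psi_dist f h + psi_dist h g"
    by (rule psi_dist_triangle[OF f borel_measurable_continuous_onI[OF h(1)]]) (use g D in blast)
  with h g show ?thesis by (intro bexI[of _ g]) auto
qed

end

lemma fst_borel_measurable:
  assumes "sets P = sets (borel :: ('x::topological_space \<times> 'y::topological_space) measure)"
  shows "fst \<in> measurable P borel"
  using borel_measurable_continuous_onI[OF continuous_on_fst[OF continuous_on_id]]
  by (simp add: measurable_cong_sets[OF assms refl])

lemma d_psi_eq_psi_dist_fst_marginal:
  fixes P :: "('x::polish_space \<times> 'y::polish_space) measure"
    and f g :: "'x \<Rightarrow> 'h::{real_normed_vector, second_countable_topology}"
  assumes "psi_distance (distr P borel fst) \<psi>" and P_sets: "sets P = sets borel"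
    and "f \<in> borel_measurable borel" "g \<in> borel_measurable borel"
  shows "d_psi P \<psi> f g = psi_distance.psi_dist (distr P borel fst) \<psi> f g"
proof -
  interpret psi_distance "distr P borel fst" \<psi> by fact
  have "fst \<in> measurable P borel"
    using P_sets by (rule fst_borel_measurable)
  moreover have "(\<lambda>x. \<psi> (dist (f x) (g x))) \<in> borel_measurable borel"
    using borel_measurable_psi_dist_integrand assms by (simp add: borel_measurable_\<mu>)
  ultimately show ?thesis
    by (simp add: d_psi_def psi_dist_def integral_distr)
qed

theorem theorem7:
  fixes P :: "('x::polish_space \<times> 'y::polish_space) measure"
    and \<psi> :: "real \<Rightarrow> real"
    and F :: "('x \<Rightarrow> 'h::{real_inner, polish_space}) set"
  assumes P_prob: "prob_space P"
    and P_sets: "sets P = sets borel"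
    and psi_cont: "continuous_on {0..} \<psi>"
    and psi_range: "\<And>t. t \<ge> 0 \<Longrightarrow> \<psi> t \<in> {0..1}"
    and psi_subadd: "\<And>a b. a \<ge> 0 \<Longrightarrow> b \<ge> 0 \<Longrightarrow> \<psi> (a + b) \<le> \<psi> a + \<psi> b"
    and psi_mono: "mono_on {0..} \<psi>"
    and psi_0: "\<psi> 0 = 0"
    and psi_pos: "\<And>t. t > 0 \<Longrightarrow> \<psi> t > 0"
    and F_L0: "F \<subseteq> borel_measurable borel"
    and F_dense: "(F \<subseteq> {f. continuous_on UNIV f} \<and> dense_wrt (d_psi P \<psi>) F {f. continuous_on UNIV f})
        \<or> (\<exists>D\<subseteq>F. D \<subseteq> {f. continuous_on UNIV f} \<and> dense_wrt (d_psi P \<psi>) D {f. continuous_on UNIV f})"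
  shows "\<forall>\<epsilon>>0. \<forall>f\<in>borel_measurable borel. \<exists>g\<in>F. d_psi P \<psi> f g < \<epsilon>"
proof (intro allI impI ballI)
  fix \<epsilon> :: real and f :: "'x \<Rightarrow> 'h" assume \<epsilon>: "\<epsilon> > 0" and f: "f \<in> borel_measurable borel"
  interpret prob_space P by (fact P_prob)
  have "psi_distance (distr P borel fst) \<psi>"
  proof (intro psi_distance.intro psi_distance_axioms.intro)
    show "finite_measure (distr P borel fst)"
      by (rule finite_measure_distr[OF fst_borel_measurable[OF P_sets]])
  qed (simp_all only: sets_distr psi_cont psi_range psi_subadd psi_mono psi_0)
  then interpret \<mu>: psi_distance "distr P borel fst" \<psi> .
  note d_psi_eq = d_psi_eq_psi_dist_fst_marginal[OF \<mu>.psi_distance_axioms P_sets]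
  obtain D where D: "D \<subseteq> F" "dense_wrt (d_psi P \<psi>) D {f. continuous_on UNIV f}"
    using F_dense by blast
  have D_L0: "D \<subseteq> borel_measurable borel"
    using D(1) F_L0 by (rule order_trans)
  have "\<exists>g\<in>D. \<mu>.psi_dist h g < \<delta>" if h: "continuous_on UNIV h" and "\<delta> > 0" for h \<delta>
  proof -
    obtain g where g: "g \<in> D" "d_psi P \<psi> h g < \<delta>"
      using D(2) h \<open>\<delta> > 0\<close> unfolding dense_wrt_def by blast
    with D_L0 have "g \<in> borel_measurable borel" by blast
    with g show ?thesis
      using d_psi_eq[OF borel_measurable_continuous_onI[OF h]] by (intro bexI[of _ g]) auto
  qed
  then obtain g where g: "g \<in> D" "\<mu>.psi_dist f g < \<epsilon>"
    using \<mu>.dense_continuous_imp_dense_borel_measurable[OF D_L0 _ f \<epsilon>] by blast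
  with D_L0 have "d_psi P \<psi> f g = \<mu>.psi_dist f g"
    using d_psi_eq[OF f] by blast
  with g D(1) show "\<exists>g\<in>F. d_psi P \<psi> f g < \<epsilon>"
    by (intro bexI[of _ g]) auto
qed

end
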